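(* Let $n$ be a positive integer. The lattice $\widetilde\Pi(D_n)$ is modular if and only if $n$ is of one of the following forms: (1) $n=2^\alpha$ for some integer $\alpha\ge 0$; (2) $n=\prod_{i=1}^{k}p_i^{t_i}$ where $p_1,\dots,p_k$ are distinct odd primes and $t_1,\dots,t_k\ge 0$ are integers (i.e., $n$ is odd); (3) $n=2p^{\alpha}$ where $p$ is an odd prime and $\alpha\ge 1$.
   Context: For a positive integer $n$, $D_n=\langle r,s\mid r^n=e,\ s^2=e,\ srs^{-1}=r^{-1}\rangle$ is the dihedral group of order $2n$. For a finite group $G$ and a subgroup $H\le G$, let $\pi_e(H)=\{o(x)\mid x\in H\}$. Let $\mathcal{L}(G)$ be the set of subgroups of $G$; define $H_1\equiv H_2$ iff $\pi_e(H_1)=\pi_e(H_2)$, with class $[H]$. The poset $\widetilde\Pi(G)$ is $\mathcal{L}(G)/\!\equiv$ ordered by $[H_1]\lesssim[H_2]$ iff $\pi_e(H_1)\subseteq\pi_e(H_2)$; for $G=D_n$ it is a lattice. *)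

theory Defs
  imports "HOL-Algebra.Algebra" "HOL-Computational_Algebra.Primes"
begin

text \<open>The dihedral group D_n of order 2n: the element (i, b) stands for r^i s^b
  (with b = True meaning one factor s), 0 \<le> i < n.  Using s r^j = r^(-j) s,
  (r^i s^a)(r^j s^b) = r^(i \<plusminus> j) s^(a+b).\<close>
definition dihedral_group :: "nat \<Rightarrow> (nat \<times> bool) monoid" where
  "dihedral_group n = \<lparr> carrier = {0..<n} \<times> UNIV,
     monoid.mult = (\<lambda>(i, a) (j, b). ((if a then i + (n - j) else i + j) mod n, a \<noteq> b)),
     monoid.one = (0, False) \<rparr>"

definition elem_orders :: "('a, 'b) monoid_scheme \<Rightarrow> 'a set \<Rightarrow> nat set" where
  "elem_orders G H = (\<lambda>x. group.ord G x) ` H"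

text \<open>The poset \<Pi>~(G): classes of subgroups under having the same pi_e, represented
  by their pi_e-sets, ordered by inclusion.\<close>
definition pi_poset :: "('a, 'b) monoid_scheme \<Rightarrow> nat set set" where
  "pi_poset G = {elem_orders G H | H. subgroup H G}"

definition is_join :: "'a set set \<Rightarrow> 'a set \<Rightarrow> 'a set \<Rightarrow> 'a set \<Rightarrow> bool" where
  "is_join S a b z \<longleftrightarrow> z \<in> S \<and> a \<subseteq> z \<and> b \<subseteq> z \<and>
      (\<forall>w\<in>S. a \<subseteq> w \<and> b \<subseteq> w \<longrightarrow> z \<subseteq> w)"

definition is_meet :: "'a set set \<Rightarrow> 'a set \<Rightarrow> 'a set \<Rightarrow> 'a set \<Rightarrow> bool" where
  "is_meet S a b z \<longleftrightarrow> z \<in> S \<and> z \<subseteq> a \<and> z \<subseteq> b \<and>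
      (\<forall>w\<in>S. w \<subseteq> a \<and> w \<subseteq> b \<longrightarrow> w \<subseteq> z)"

definition pjoin :: "'a set set \<Rightarrow> 'a set \<Rightarrow> 'a set \<Rightarrow> 'a set" where
  "pjoin S a b = (THE z. is_join S a b z)"

definition pmeet :: "'a set set \<Rightarrow> 'a set \<Rightarrow> 'a set \<Rightarrow> 'a set" where
  "pmeet S a b = (THE z. is_meet S a b z)"

definition is_lattice_family :: "'a set set \<Rightarrow> bool" where
  "is_lattice_family S \<longleftrightarrow> (\<forall>a\<in>S. \<forall>b\<in>S. (\<exists>z. is_join S a b z) \<and> (\<exists>z. is_meet S a b z))"

definition modular_lattice_family :: "'a set set \<Rightarrow> bool" where
  "modular_lattice_family S \<longleftrightarrow> is_lattice_family S \<and>
     (\<forall>a\<in>S. \<forall>b\<in>S. \<forall>c\<in>S. a \<subseteq> c \<longrightarrow>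
        pjoin S a (pmeet S b c) = pmeet S (pjoin S a b) c)"

end

theory Submission
  imports Defs
begin

(* In D_n the rotation r^i has order n / gcd n i and every reflection has order 2, and the
   rotations in a subgroup are exactly the r^i with g dvd i for some g dividing n. Hence the
   sets pi_e(H) are the sets D(m) \<union> E with m dividing n, D(m) the divisors of m and
   E \<subseteq> {2}. In this family meets are intersections and, for m, m' \<noteq> 2, the join
   of D(m) \<union> E and D(m') \<union> E' is D(lcm m m') \<union> E \<union> E'. Since lcm distributes
   over gcd, the modular law can only fail through even divisors: it holds iff no two even
   divisors of n other than 2 have gcd 2. Conversely, divisors 2p and 2f of n with p odd, f \<noteq> 1
   and p, f coprime yield the pentagon D(p) \<union> {2} \<subseteq> D(2p), D(2f); such divisors exist
   exactly when n is even but neither a power of 2 nor twice a power of an odd prime. *)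

section \<open>The dihedral group\<close>

lemma dihedral_carrier [simp]: "carrier (dihedral_group n) = {0..<n} \<times> UNIV"
  by (simp add: dihedral_group_def)

lemma dihedral_mult [simp]:
  "(i, a) \<otimes>\<^bsub>dihedral_group n\<^esub> (j, b) = ((if a then i + (n - j) else i + j) mod n, a \<noteq> b)"
  by (simp add: dihedral_group_def)

lemma dihedral_one [simp]: "\<one>\<^bsub>dihedral_group n\<^esub> = (0, False)"
  by (simp add: dihedral_group_def)

text \<open>On integer indices the rotation part of a product is i + j or i - j modulo n, free of the
  truncated subtraction n - j; this turns associativity into a congruence.\<close>

lemma dihedral_mult_int:
  assumes "j < n"
  shows "(i, a) \<otimes>\<^bsub>dihedral_group n\<^esub> (j, b) =
    (nat ((int i + (if a then - int j else int j)) mod int n), a \<noteq> b)"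
proof -
  have "int (i + (n - j)) = (int i - int j) + int n"
    using assms by simp
  then have "int ((if a then i + (n - j) else i + j) mod n) =
      (int i + (if a then - int j else int j)) mod int n"
    by (cases a) (simp_all only: of_nat_mod mod_add_self2 of_nat_add if_True if_False diff_conv_add_uminus)
  then show ?thesis
    by (simp del: of_nat_mod flip: nat_int)
qed

lemma dihedral_inverse_mult:
  assumes "i < n"
  shows "(if b then (i, True) else ((n - i) mod n, False)) \<otimes>\<^bsub>dihedral_group n\<^esub> (i, b) =
    \<one>\<^bsub>dihedral_group n\<^esub>"
proof -
  have "((n - i) mod n + i) mod n = 0"
    using assms by (simp add: mod_add_left_eq)
  then show ?thesis
    using assms by simp
qed

lemma group_dihedral_group:
  assumes "n \<ge> 1"
  shows "group (dihedral_group n)"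
proof (rule groupI)
  fix x y
  assume "x \<in> carrier (dihedral_group n)" "y \<in> carrier (dihedral_group n)"
  then show "x \<otimes>\<^bsub>dihedral_group n\<^esub> y \<in> carrier (dihedral_group n)"
    using assms by (cases x, cases y) simp
next
  fix x y z
  assume "x \<in> carrier (dihedral_group n)" "y \<in> carrier (dihedral_group n)"
    "z \<in> carrier (dihedral_group n)"
  then obtain i a j b k c where xyz: "x = (i, a)" "y = (j, b)" "z = (k, c)" "j < n" "k < n"
    by (cases x, cases y, cases z) auto
  have "nat ((int i + (if a then - int j else int j)) mod int n) < n"
    "nat ((int j + (if b then - int k else int k)) mod int n) < n"
    using assms by (simp_all add: nat_less_iff)
  then show "x \<otimes>\<^bsub>dihedral_group n\<^esub> y \<otimes>\<^bsub>dihedral_group n\<^esub> z =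
      x \<otimes>\<^bsub>dihedral_group n\<^esub> (y \<otimes>\<^bsub>dihedral_group n\<^esub> z)"
    using xyz assms
    by (cases a; cases b) (simp_all del: dihedral_mult add: dihedral_mult_int mod_simps algebra_simps)
next
  fix x
  assume "x \<in> carrier (dihedral_group n)"
  then obtain i b where x: "x = (i, b)" "i < n"
    by (cases x) auto
  show "\<one>\<^bsub>dihedral_group n\<^esub> \<otimes>\<^bsub>dihedral_group n\<^esub> x = x"
    using x by simp
  show "\<exists>y\<in>carrier (dihedral_group n).
      y \<otimes>\<^bsub>dihedral_group n\<^esub> x = \<one>\<^bsub>dihedral_group n\<^esub>"
  proof
    show "(if b then (i, True) else ((n - i) mod n, False)) \<in> carrier (dihedral_group n)"
      using x(2) assms by simp
  qed (use dihedral_inverse_mult[OF x(2)] x(1) in simp)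
qed (use assms in simp)

lemma dihedral_rotation_pow: "(i, False) [^]\<^bsub>dihedral_group n\<^esub> k = (i * k mod n, False)"
  by (induction k) (simp_all add: mod_add_left_eq mod_add_right_eq algebra_simps)

lemma ord_dihedral_rotation:
  assumes "n \<ge> 1" "i < n"
  shows "group.ord (dihedral_group n) (i, False) = n div gcd n i"
proof -
  interpret D: group "dihedral_group n"
    using assms(1) by (rule group_dihedral_group)
  \<comment> \<open>the generator is written 1 mod n because for n = 1 the index 1 lies outside the carrier\<close>
  let ?r = "(1 mod n, False)"
  have r: "?r \<in> carrier (dihedral_group n)"
    using assms by simp
  have "D.ord ?r = n"
    using r by (subst D.ord_unique) (auto simp: dihedral_rotation_pow mod_mult_left_eq dvd_eq_mod_eq_0)
  moreover have "(i, False) = ?r [^]\<^bsub>dihedral_group n\<^esub> i"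
    using assms by (simp add: dihedral_rotation_pow mod_mult_left_eq)
  ultimately show ?thesis
    using D.ord_pow_gen[OF r, of i] assms by auto
qed

lemma ord_dihedral_reflection:
  assumes "n \<ge> 1" "i < n"
  shows "group.ord (dihedral_group n) (i, True) = 2"
proof -
  interpret D: group "dihedral_group n"
    using assms(1) by (rule group_dihedral_group)
  have s: "(i, True) \<in> carrier (dihedral_group n)"
    using assms by simp
  have "(i, True) [^]\<^bsub>dihedral_group n\<^esub> (2::nat) = \<one>\<^bsub>dihedral_group n\<^esub>"
    using assms by (simp add: numeral_2_eq_2)
  then have "D.ord (i, True) dvd 2"
    using D.pow_eq_id[OF s] by blast
  moreover have "D.ord (i, True) \<noteq> 1"
    using D.ord_eq_1[OF s] by simp
  ultimately show ?thesis
    using dvd_imp_le[of "D.ord (i, True)" 2] by (cases "D.ord (i, True)") auto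
qed

section \<open>Element orders of subgroups\<close>

definition divisors :: "nat \<Rightarrow> nat set" where
  "divisors m = {d. d dvd m}"

text \<open>The candidates for pi_e(H): the divisors of the order of the rotation subgroup of H,
  together with 2 when H contains a reflection.\<close>

definition divisor_family :: "nat \<Rightarrow> nat set set" where
  "divisor_family n = {divisors m \<union> E | m E. m dvd n \<and> E \<subseteq> {2}}"

lemma divisor_familyI: "m dvd n \<Longrightarrow> E \<subseteq> {2} \<Longrightarrow> divisors m \<union> E \<in> divisor_family n"
  unfolding divisor_family_def by blast

lemma elem_orders_dihedral_rotations:
  assumes "n \<ge> 1" "g dvd n"
  shows "elem_orders (dihedral_group n) {(i, False) | i. i < n \<and> g dvd i} = divisors (n div g)"
proof (intro equalityI subsetI)
  fix d
  assume "d \<in> elem_orders (dihedral_group n) {(i, False) | i. i < n \<and> g dvd i}"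
  then obtain i where i: "i < n" "g dvd i" "d = n div gcd n i"
    using assms by (auto simp: elem_orders_def ord_dihedral_rotation)
  obtain u where u: "n = gcd n i * u"
    by (metis gcd_dvd1 dvdE)
  obtain v where "gcd n i = g * v"
    using assms(2) i(2) by (metis gcd_greatest dvdE)
  then show "d \<in> divisors (n div g)"
    using u i assms(1) by (auto simp: divisors_def)
next
  fix d
  assume "d \<in> divisors (n div g)"
  then obtain e where "n div g = d * e"
    by (auto simp: divisors_def elim!: dvdE)
  then have e: "n = d * (g * e)"
    using assms(2) by (metis dvd_mult_div_cancel mult.left_commute)
  then have "d > 0" "g * e > 0"
    using assms(1) by auto
  then have "group.ord (dihedral_group n) (g * e mod n, False) = d"
    using assms(1) e by (simp add: ord_dihedral_rotation gcd_mod_right)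
  moreover have "g dvd g * e mod n"
    using assms(2) by (simp add: dvd_mod)
  ultimately show "d \<in> elem_orders (dihedral_group n) {(i, False) | i. i < n \<and> g dvd i}"
    using assms(1) unfolding elem_orders_def by (intro image_eqI[of _ _ "(g * e mod n, False)"]) auto
qed

lemma inv_dihedral:
  assumes "n \<ge> 1" "i < n"
  shows "inv\<^bsub>dihedral_group n\<^esub> (i, b) = (if b then (i, True) else ((n - i) mod n, False))"
  using assms dihedral_inverse_mult[OF assms(2)]
  by (intro group.inv_equality[OF group_dihedral_group]) auto

text \<open>Subgroups of a cyclic group are cyclic, phrased on the indices of rotations.\<close>

lemma add_closed_mod_invariant_eq_multiples:
  fixes S :: "nat set"
  assumes "n > 0" "n \<in> S"
    and add: "\<And>x y. x \<in> S \<Longrightarrow> y \<in> S \<Longrightarrow> x + y \<in> S"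
    and mod: "\<And>x. x mod n \<in> S \<longleftrightarrow> x \<in> S"
  obtains g where "g dvd n" "S = {x. g dvd x}"
proof -
  have "0 \<in> S"
    using mod[of n] assms(2) by simp
  have mult: "g * k \<in> S" if "g \<in> S" for g k
    by (induction k) (simp_all add: \<open>0 \<in> S\<close> add that)
  define g where "g = (LEAST x. 0 < x \<and> x \<in> S)"
  have g: "0 < g" "g \<in> S"
    using LeastI[of "\<lambda>x. 0 < x \<and> x \<in> S" n] assms(1,2) by (simp_all add: g_def)
  have "g dvd x" if "x \<in> S" for x
  proof -
    define q r where "q = x div g" and "r = x mod g"
    obtain m where m: "n = Suc m"
      using assms(1) gr0_implies_Suc by blast
    have "x = g * q + r"
      by (simp add: q_def r_def)
    then have "x + g * (q * m) = r + n * (g * q)"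
      unfolding m by (simp add: algebra_simps)
    moreover have "x + g * (q * m) \<in> S"
      using that g(2) by (intro add mult)
    ultimately have "(r + n * (g * q)) mod n \<in> S"
      using mod by (simp only:)
    then have "r mod n \<in> S"
      by simp
    then have "r \<in> S"
      using mod by blast
    moreover have "r < g"
      using g(1) by (simp add: r_def)
    ultimately have "r = 0"
      using not_less_Least[of r "\<lambda>x. 0 < x \<and> x \<in> S"] by (auto simp: g_def)
    then show ?thesis
      by (simp add: r_def dvd_eq_mod_eq_0)
  qed
  then have "S = {x. g dvd x}"
    using mult[OF g(2)] by auto
  then show ?thesis
    using that assms(2) by blast
qed

lemma dihedral_subgroup_rotations:
  assumes "n \<ge> 1" "subgroup H (dihedral_group n)"
  obtains g where "g dvd n" "{x \<in> H. \<not> snd x} = {(i, False) | i. i < n \<and> g dvd i}"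
proof -
  let ?S = "{x. (x mod n, False) \<in> H}"
  have "n \<in> ?S"
    using subgroup.one_closed[OF assms(2)] by simp
  moreover have "x + y \<in> ?S" if "x \<in> ?S" "y \<in> ?S" for x y
    using subgroup.m_closed[OF assms(2) that[simplified]] by (simp add: mod_add_eq)
  moreover have "x mod n \<in> ?S \<longleftrightarrow> x \<in> ?S" for x
    by simp
  ultimately obtain g where g: "g dvd n" "?S = {x. g dvd x}"
    using add_closed_mod_invariant_eq_multiples[of n ?S] assms(1) by auto
  have "(i, b) \<in> H \<Longrightarrow> i < n" for i b
    using subgroup.subset[OF assms(2)] by auto
  moreover have "(i, False) \<in> H \<longleftrightarrow> g dvd i" if "i < n" for i
    using g(2)[THEN eqset_imp_iff, of i] that by simp
  ultimately have "{x \<in> H. \<not> snd x} = {(i, False) | i. i < n \<and> g dvd i}"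
    by fastforce
  then show ?thesis
    using that g(1) by blast
qed

lemma subgroup_dihedral_multiples:
  assumes "n \<ge> 1" "g dvd n"
  shows "subgroup {(i, b). i < n \<and> g dvd i \<and> (b \<longrightarrow> R)} (dihedral_group n)"
proof (rule group.subgroupI[OF group_dihedral_group[OF assms(1)]])
  let ?H = "{(i, b). i < n \<and> g dvd i \<and> (b \<longrightarrow> R)}"
  show "?H \<subseteq> carrier (dihedral_group n)" "?H \<noteq> {}"
    using assms(1) by auto
  show "inv\<^bsub>dihedral_group n\<^esub> x \<in> ?H" if "x \<in> ?H" for x
  proof -
    obtain i b where x: "x = (i, b)" "i < n" "g dvd i" "b \<longrightarrow> R"
      using \<open>x \<in> ?H\<close> by blast
    have "g dvd (n - i) mod n"
      using assms(2) x(3) by (simp add: dvd_mod dvd_diff_nat)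
    then show ?thesis
      using x assms(1) by (simp add: inv_dihedral)
  qed
  show "x \<otimes>\<^bsub>dihedral_group n\<^esub> y \<in> ?H" if xy: "x \<in> ?H" "y \<in> ?H" for x y
  proof -
    obtain i a j b
      where "x = (i, a)" "y = (j, b)" "g dvd i" "g dvd j" "a \<longrightarrow> R" "b \<longrightarrow> R" "j < n"
      using xy by blast
    then show ?thesis
      using assms by (auto simp: dvd_mod dvd_diff_nat)
  qed
qed

lemma elem_orders_Un: "elem_orders G (A \<union> B) = elem_orders G A \<union> elem_orders G B"
  by (simp add: elem_orders_def image_Un)

lemma elem_orders_dihedral_subgroup:
  assumes "n \<ge> 1" "H \<subseteq> carrier (dihedral_group n)" "g dvd n"
    and rotations: "{x \<in> H. \<not> snd x} = {(i, False) | i. i < n \<and> g dvd i}"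
  shows "elem_orders (dihedral_group n) H =
    divisors (n div g) \<union> (if \<exists>i. (i, True) \<in> H then {2} else {})"
proof -
  let ?rot = "{x \<in> H. \<not> snd x}" and ?refl = "{x \<in> H. snd x}"
  have "group.ord (dihedral_group n) x = 2" if "x \<in> ?refl" for x
    using that assms(1,2) by (auto simp: ord_dihedral_reflection)
  then have "elem_orders (dihedral_group n) ?refl = (\<lambda>_. 2) ` ?refl"
    unfolding elem_orders_def by (rule image_cong[OF refl])
  also have "\<dots> = (if \<exists>i. (i, True) \<in> H then {2} else {})"
    by (auto simp: image_constant_conv)
  finally have refl:
    "elem_orders (dihedral_group n) ?refl = (if \<exists>i. (i, True) \<in> H then {2} else {})" .
  have "H = ?rot \<union> ?refl"
    by blast
  then have "elem_orders (dihedral_group n) H =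
      elem_orders (dihedral_group n) ?rot \<union> elem_orders (dihedral_group n) ?refl"
    by (metis elem_orders_Un)
  also have "elem_orders (dihedral_group n) ?rot = divisors (n div g)"
    unfolding rotations by (rule elem_orders_dihedral_rotations[OF assms(1,3)])
  finally show ?thesis
    by (simp only: refl)
qed

lemma pi_poset_dihedral_group:
  assumes "n \<ge> 1"
  shows "pi_poset (dihedral_group n) = divisor_family n"
proof (intro equalityI subsetI)
  fix Y
  assume "Y \<in> pi_poset (dihedral_group n)"
  then obtain H where H: "subgroup H (dihedral_group n)" "Y = elem_orders (dihedral_group n) H"
    unfolding pi_poset_def by blast
  obtain g where g: "g dvd n" "{x \<in> H. \<not> snd x} = {(i, False) | i. i < n \<and> g dvd i}"
    using dihedral_subgroup_rotations[OF assms H(1)] by blast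
  have "n div g dvd n"
    using g(1) assms by (auto elim!: dvdE)
  then show "Y \<in> divisor_family n"
    using elem_orders_dihedral_subgroup[OF assms subgroup.subset[OF H(1)] g] H(2)
    by (simp add: divisor_familyI)
next
  fix Y
  assume "Y \<in> divisor_family n"
  then obtain m E where Y: "Y = divisors m \<union> E" "m dvd n" "E \<subseteq> {2}"
    unfolding divisor_family_def by blast
  obtain g where "n = m * g"
    using Y(2) by (rule dvdE)
  then have "g dvd n" "n div g = m"
    using assms by auto
  let ?H = "{(i, b). i < n \<and> g dvd i \<and> (b \<longrightarrow> 2 \<in> E)}"
  have sub: "subgroup ?H (dihedral_group n)"
    using assms \<open>g dvd n\<close> by (rule subgroup_dihedral_multiples)
  have rot: "{x \<in> ?H. \<not> snd x} = {(i, False) | i. i < n \<and> g dvd i}"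
    by auto
  have refl: "(\<exists>i. (i, True) \<in> ?H) \<longleftrightarrow> 2 \<in> E"
    using assms by (auto intro: exI[of _ 0])
  have "elem_orders (dihedral_group n) ?H = divisors m \<union> (if 2 \<in> E then {2} else {})"
    using elem_orders_dihedral_subgroup[OF assms subgroup.subset[OF sub] \<open>g dvd n\<close> rot]
    by (simp only: \<open>n div g = m\<close> refl)
  also have "\<dots> = Y"
    using Y(1,3) by (auto simp: subset_singleton_iff)
  finally show "Y \<in> pi_poset (dihedral_group n)"
    using sub unfolding pi_poset_def by blast
qed

section \<open>The lattice of order sets\<close>

lemma is_joinD:
  assumes "is_join S a b z"
  shows "z \<in> S" "a \<subseteq> z" "b \<subseteq> z" "\<And>w. w \<in> S \<Longrightarrow> a \<subseteq> w \<Longrightarrow> b \<subseteq> w \<Longrightarrow> z \<subseteq> w"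
  using assms unfolding is_join_def by blast+

lemma pjoin_eqI: "is_join S a b z \<Longrightarrow> pjoin S a b = z"
  unfolding pjoin_def is_join_def by (rule the_equality) blast+

lemma pmeet_eq_Int: "a \<inter> b \<in> S \<Longrightarrow> pmeet S a b = a \<inter> b"
  unfolding pmeet_def is_meet_def by (rule the_equality) blast+

lemma is_join_pjoin: "is_lattice_family S \<Longrightarrow> a \<in> S \<Longrightarrow> b \<in> S \<Longrightarrow> is_join S a b (pjoin S a b)"
  unfolding is_lattice_family_def using pjoin_eqI by metis

lemma is_join_of_subset: "a \<in> S \<Longrightarrow> b \<subseteq> a \<Longrightarrow> is_join S a b a"
  unfolding is_join_def by blast

lemma modular_lattice_familyD:
  assumes modular: "modular_lattice_family S" and Int: "\<And>a b. a \<in> S \<Longrightarrow> b \<in> S \<Longrightarrow> a \<inter> b \<in> S"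
    and abc: "a \<in> S" "b \<in> S" "c \<in> S" "a \<subseteq> c"
  shows "pjoin S a (b \<inter> c) = pjoin S a b \<inter> c"
proof -
  have "is_lattice_family S"
    using modular unfolding modular_lattice_family_def by (rule conjunct1)
  then have "pjoin S a b \<in> S"
    using abc by (blast intro: is_join_pjoin is_joinD)
  moreover have "pjoin S a (pmeet S b c) = pmeet S (pjoin S a b) c"
    using modular abc unfolding modular_lattice_family_def by blast
  ultimately show ?thesis
    using abc Int by (simp add: pmeet_eq_Int)
qed

text \<open>When meets are intersections, one inclusion of the modular law holds in every lattice.\<close>

lemma modular_lattice_familyI:
  assumes lattice: "is_lattice_family S" and Int: "\<And>a b. a \<in> S \<Longrightarrow> b \<in> S \<Longrightarrow> a \<inter> b \<in> S"
    and modular: "\<And>a b c. a \<in> S \<Longrightarrow> b \<in> S \<Longrightarrow> c \<in> S \<Longrightarrow> a \<subseteq> c \<Longrightarrow>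
      pjoin S a b \<inter> c \<subseteq> pjoin S a (b \<inter> c)"
  shows "modular_lattice_family S"
  unfolding modular_lattice_family_def
proof (intro conjI lattice ballI impI)
  fix a b c
  assume abc: "a \<in> S" "b \<in> S" "c \<in> S" "a \<subseteq> c"
  have ab: "is_join S a b (pjoin S a b)"
    using lattice abc(1,2) by (rule is_join_pjoin)
  have "pjoin S a b \<inter> c \<in> S"
    using is_joinD(1)[OF ab] abc(3) by (rule Int)
  moreover have "a \<subseteq> pjoin S a b \<inter> c" "b \<inter> c \<subseteq> pjoin S a b \<inter> c"
    using is_joinD(2,3)[OF ab] abc(4) by auto
  ultimately have sub: "pjoin S a (b \<inter> c) \<subseteq> pjoin S a b \<inter> c"
    by (rule is_joinD(4)[OF is_join_pjoin[OF lattice abc(1) Int[OF abc(2,3)]]])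
  have meets: "pmeet S b c = b \<inter> c" "pmeet S (pjoin S a b) c = pjoin S a b \<inter> c"
    using abc Int is_joinD(1)[OF ab] by (simp_all add: pmeet_eq_Int)
  show "pjoin S a (pmeet S b c) = pmeet S (pjoin S a b) c"
    unfolding meets using sub modular[OF abc] by (rule subset_antisym)
qed

lemma divisors_Int: "divisors a \<inter> divisors b = divisors (gcd a b)"
  by (auto simp: divisors_def)

lemma divisors_2: "divisors 2 = divisors 1 \<union> {2}"
  using two_is_prime_nat by (auto simp: divisors_def prime_nat_iff)

lemma divisor_family_Int:
  assumes "x \<in> divisor_family n" "y \<in> divisor_family n"
  shows "x \<inter> y \<in> divisor_family n"
proof -
  obtain mx Ex my Ey where
    "x = divisors mx \<union> Ex" "y = divisors my \<union> Ey" "mx dvd n" "Ex \<subseteq> {2}" "Ey \<subseteq> {2}"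
    using assms unfolding divisor_family_def by blast
  then have "x \<inter> y = divisors (gcd mx my) \<union> ({2} \<inter> x \<inter> y)" and "gcd mx my dvd n"
    by (auto simp: divisors_def intro: dvd_trans)
  then show ?thesis
    using divisor_familyI[of "gcd mx my" n "{2} \<inter> x \<inter> y"] by auto
qed

text \<open>Since divisors 2 = divisors 1 \<union> {2}, the index m can be taken different from 2, the only
  value that could hide in E.\<close>

lemma divisor_family_cases:
  assumes "x \<in> divisor_family n"
  obtains m E where "x = divisors m \<union> E" "m dvd n" "m \<noteq> 2" "E \<subseteq> {2}"
proof -
  obtain m E where mE: "x = divisors m \<union> E" "m dvd n" "E \<subseteq> {2}"
    using assms unfolding divisor_family_def by blast
  show ?thesis
  proof (cases "m = 2")
    case True
    then show ?thesis
      using that[of 1 "{2}"] mE divisors_2 by auto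
  next
    case False
    then show ?thesis
      using that mE by blast
  qed
qed

lemma divisors_lcm_subset:
  assumes "x \<in> divisor_family n" "a \<in> x" "b \<in> x" "a \<noteq> 2" "b \<noteq> 2"
  shows "divisors (lcm a b) \<subseteq> x"
proof -
  obtain m E where "x = divisors m \<union> E" "E \<subseteq> {2}"
    using assms(1) unfolding divisor_family_def by blast
  then have "lcm a b dvd m" and "x = divisors m \<union> E"
    using assms(2-5) by (auto simp: divisors_def)
  then show ?thesis
    by (auto simp: divisors_def intro: dvd_trans)
qed

lemma is_join_divisor_family:
  assumes "ma dvd n" "mb dvd n" "ma \<noteq> 2" "mb \<noteq> 2" "Ea \<subseteq> {2}" "Eb \<subseteq> {2}"
  shows "is_join (divisor_family n) (divisors ma \<union> Ea) (divisors mb \<union> Eb)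
    (divisors (lcm ma mb) \<union> Ea \<union> Eb)"
  unfolding is_join_def
proof (intro conjI ballI impI)
  show "divisors (lcm ma mb) \<union> Ea \<union> Eb \<in> divisor_family n"
    using assms divisor_familyI[of "lcm ma mb" n "Ea \<union> Eb"] by (simp add: Un_assoc)
  show "divisors ma \<union> Ea \<subseteq> divisors (lcm ma mb) \<union> Ea \<union> Eb"
    "divisors mb \<union> Eb \<subseteq> divisors (lcm ma mb) \<union> Ea \<union> Eb"
    by (auto simp: divisors_def intro: dvd_trans)
next
  fix w
  assume "w \<in> divisor_family n" "divisors ma \<union> Ea \<subseteq> w \<and> divisors mb \<union> Eb \<subseteq> w"
  moreover from this have "divisors (lcm ma mb) \<subseteq> w"
    using assms(3,4) by (intro divisors_lcm_subset[of w n]) (auto simp: divisors_def)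
  ultimately show "divisors (lcm ma mb) \<union> Ea \<union> Eb \<subseteq> w"
    by blast
qed

lemma is_lattice_family_divisor_family: "is_lattice_family (divisor_family n)"
  unfolding is_lattice_family_def
proof (intro ballI conjI)
  fix a b
  assume a: "a \<in> divisor_family n" and b: "b \<in> divisor_family n"
  show "\<exists>z. is_meet (divisor_family n) a b z"
    using divisor_family_Int[OF a b] unfolding is_meet_def by blast
  obtain ma Ea mb Eb where "a = divisors ma \<union> Ea" "ma dvd n" "ma \<noteq> 2" "Ea \<subseteq> {2}"
    "b = divisors mb \<union> Eb" "mb dvd n" "mb \<noteq> 2" "Eb \<subseteq> {2}"
    using divisor_family_cases[OF a] divisor_family_cases[OF b] by metis
  then show "\<exists>z. is_join (divisor_family n) a b z"
    using is_join_divisor_family by blast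
qed

section \<open>Modularity\<close>

definition no_even_divisor_pair_gcd_2 :: "nat \<Rightarrow> bool" where
  "no_even_divisor_pair_gcd_2 n \<longleftrightarrow> (\<forall>e1 e2. e1 dvd n \<longrightarrow> e2 dvd n \<longrightarrow> even e1 \<longrightarrow> even e2 \<longrightarrow>
     e1 \<noteq> 2 \<longrightarrow> e2 \<noteq> 2 \<longrightarrow> gcd e1 e2 \<noteq> 2)"

lemma no_even_divisor_pair_gcd_2I:
  assumes "\<And>e. e dvd n \<Longrightarrow> even e \<Longrightarrow> e \<noteq> 2 \<Longrightarrow> q dvd e" "\<not> q dvd 2"
  shows "no_even_divisor_pair_gcd_2 n"
  unfolding no_even_divisor_pair_gcd_2_def using assms by (metis gcd_greatest)

lemma no_even_divisor_pair_gcd_2_if_special_form: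
  assumes "(\<exists>\<alpha>::nat. n = 2 ^ \<alpha>) \<or> odd n \<or>
    (\<exists>(p::nat) (\<alpha>::nat). Factorial_Ring.prime p \<and> odd p \<and> \<alpha> \<ge> 1 \<and> n = 2 * p ^ \<alpha>)"
  shows "no_even_divisor_pair_gcd_2 n"
  using assms
proof (elim disjE exE conjE)
  fix \<alpha>
  assume n: "n = 2 ^ \<alpha>"
  show ?thesis
  proof (rule no_even_divisor_pair_gcd_2I[of _ 4])
    fix e
    assume "e dvd n" "even e" "e \<noteq> 2"
    then obtain i where "e = 2 ^ i" "i \<noteq> 0" "i \<noteq> 1"
      using n divides_primepow_nat[OF two_is_prime_nat] by fastforce
    then show "4 dvd e"
      using le_imp_power_dvd[of 2 i "2::nat"] by simp
  qed simp
next
  assume "odd n"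
  then show ?thesis
    unfolding no_even_divisor_pair_gcd_2_def by (metis dvd_trans)
next
  fix p \<alpha> :: nat
  assume p: "Factorial_Ring.prime p" "odd p" and n: "n = 2 * p ^ \<alpha>"
  show ?thesis
  proof (rule no_even_divisor_pair_gcd_2I[of _ p])
    fix e
    assume "e dvd n" "even e" "e \<noteq> 2"
    then obtain d where d: "e = 2 * d" "d dvd p ^ \<alpha>"
      using n by (auto elim!: evenE)
    then obtain i where "d = p ^ i"
      using divides_primepow_nat[OF p(1)] by blast
    moreover have "i \<noteq> 0"
      using calculation d \<open>e \<noteq> 2\<close> by auto
    ultimately show "p dvd e"
      using d by simp
  next
    show "\<not> p dvd 2"
      using p primes_dvd_imp_eq[OF p(1) two_is_prime_nat] by auto
  qed
qed

lemma doubled_coprime_divisors: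
  fixes n :: nat
  assumes "n \<ge> 1" "even n" "\<nexists>\<alpha>. n = 2 ^ \<alpha>"
    "\<nexists>p \<alpha>. Factorial_Ring.prime p \<and> odd p \<and> \<alpha> \<ge> 1 \<and> n = 2 * p ^ \<alpha>"
  obtains p f where "odd p" "p \<noteq> 1" "f \<noteq> 1" "coprime p f" "2 * p dvd n" "2 * f dvd n"
proof -
  obtain p where p: "Factorial_Ring.prime p" "p dvd n" "p \<noteq> 2"
    using Ex_other_prime_factor[of n 2] assms(1,3) by (auto simp: in_prime_factors_iff)
  have "odd p"
    using p primes_dvd_imp_eq[OF two_is_prime_nat p(1)] by auto
  then have "2 * p dvd n"
    using p(2) assms(2) by (intro divides_mult) auto
  show ?thesis
  proof (cases "4 dvd n")
    case True
    then show ?thesis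
      using that[of p 2] \<open>odd p\<close> \<open>2 * p dvd n\<close> prime_gt_1_nat[OF p(1)] by simp
  next
    case False
    define r where "r = n div 2"
    have n: "n = 2 * r"
      using assms(2) by (simp add: r_def)
    then have "odd r"
      using False by auto
    have "p dvd r"
      using p(2) \<open>odd p\<close> n by (simp add: coprime_dvd_mult_right_iff)
    have "\<nexists>k. r = p ^ k"
    proof
      assume "\<exists>k. r = p ^ k"
      then obtain k where "r = p ^ k" ..
      moreover have "k \<ge> 1"
        using calculation \<open>p dvd r\<close> p(1) by (cases k) auto
      ultimately show False
        using assms(4) p(1) \<open>odd p\<close> n by blast
    qed
    then obtain q where q: "Factorial_Ring.prime q" "q dvd r" "q \<noteq> p"
      using Ex_other_prime_factor[of r p] p(1) n assms(1) by (auto simp: in_prime_factors_iff)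
    have "coprime p q"
      using p(1) q(1,3) by (simp add: primes_coprime)
    moreover have "2 * q dvd n"
      using q(2) n by simp
    ultimately show ?thesis
      using that[of p q] \<open>odd p\<close> \<open>2 * p dvd n\<close> prime_gt_1_nat[OF p(1)] prime_gt_1_nat[OF q(1)]
      by simp
  qed
qed

lemma even_lcm_iff: "even (lcm a b) \<longleftrightarrow> even a \<or> even (b :: nat)"
proof
  assume "even (lcm a b)"
  moreover have "lcm a b dvd a * b"
    by (simp add: lcm_least)
  ultimately have "even (a * b)"
    by (rule dvd_trans)
  then show "even a \<or> even b"
    by simp
qed (auto intro: dvd_trans[OF _ dvd_lcm1] dvd_trans[OF _ dvd_lcm2])

text \<open>The arithmetic core of modularity: when gcd mb mc = 2, the join with b \<inter> c adds only
  the element 2, and a divisor z outside divisors ma would be an even divisor of n meeting mb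
  in gcd 2.\<close>

lemma dvd_lcm_gcd_cases:
  assumes "no_even_divisor_pair_gcd_2 n" "mb dvd n" "mc dvd n" "mb \<noteq> 2" "ma dvd mc"
    and "z dvd lcm ma mb" "z dvd mc" "z \<noteq> 2"
  shows "z dvd ma \<or> (gcd mb mc \<noteq> 2 \<and> z dvd lcm ma (gcd mb mc))"
proof -
  have "z dvd gcd (lcm ma mb) (lcm ma mc)"
    using assms(5-7) by (simp add: lcm_proj2_if_dvd)
  then have z_dvd: "z dvd lcm ma (gcd mb mc)"
    by (simp only: lcm_gcd_distrib)
  show ?thesis
  proof (cases "gcd mb mc = 2")
    case gcd: True
    show ?thesis
    proof (cases "even z")
      case True
      have "even mb"
        using gcd by (metis gcd_dvd1)
      have "gcd z mb dvd gcd mc mb"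
        using assms(7) by (meson dvd_trans gcd_dvd1 gcd_dvd2 gcd_greatest)
      then have "gcd z mb = 2"
        using gcd True \<open>even mb\<close> by (simp add: gcd.commute dvd_antisym)
      moreover have "z dvd n"
        using assms(7,3) by (rule dvd_trans)
      ultimately show ?thesis
        using assms(1,2,4,8) True \<open>even mb\<close> unfolding no_even_divisor_pair_gcd_2_def by blast
    next
      case False
      have "lcm ma 2 dvd 2 * ma"
        by (simp add: lcm_least)
      with z_dvd have "z dvd 2 * ma"
        unfolding gcd by (rule dvd_trans)
      then show ?thesis
        using False by (simp add: coprime_dvd_mult_right_iff)
    qed
  qed (use z_dvd in blast)
qed

lemma divisor_family_modular_cases:
  assumes "no_even_divisor_pair_gcd_2 n" "mb dvd n" "mc dvd n" "ma \<noteq> 2" "mb \<noteq> 2" "Ec \<subseteq> {2}"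
    and ac: "divisors ma \<union> Ea \<subseteq> divisors mc \<union> Ec"
    and z: "z \<in> divisors (lcm ma mb) \<union> Ea \<union> Eb" "z \<in> divisors mc \<union> Ec"
  shows "z \<in> divisors ma \<union> Ea \<or> z \<in> (divisors mb \<union> Eb) \<inter> (divisors mc \<union> Ec) \<or>
    (gcd mb mc \<noteq> 2 \<and> z dvd lcm ma (gcd mb mc))"
proof -
  consider "z \<in> Ea" | "z \<in> Eb" | "z = 2" "z dvd lcm ma mb" | "z \<noteq> 2" "z dvd lcm ma mb"
    using z(1) by (auto simp: divisors_def)
  then show ?thesis
  proof cases
    case 3
    then have "even ma \<or> even mb"
      by (simp add: even_lcm_iff)
    then show ?thesis
      using 3 z(2) by (auto simp: divisors_def)
  next
    case 4
    have "ma \<in> divisors ma \<union> Ea"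
      by (simp add: divisors_def)
    then have "ma \<in> divisors mc \<union> Ec"
      using ac by blast
    then have "ma dvd mc"
      using assms(4,6) by (auto simp: divisors_def)
    moreover have "z dvd mc"
      using z(2) 4(1) assms(6) by (auto simp: divisors_def)
    ultimately show ?thesis
      using dvd_lcm_gcd_cases[OF assms(1-3,5) _ 4(2) _ 4(1)] by (auto simp: divisors_def)
  qed (use z(2) in auto)
qed

lemma modular_divisor_family:
  assumes "no_even_divisor_pair_gcd_2 n"
  shows "modular_lattice_family (divisor_family n)"
proof (rule modular_lattice_familyI[OF is_lattice_family_divisor_family divisor_family_Int])
  let ?F = "divisor_family n"
  fix a b c
  assume abc: "a \<in> ?F" "b \<in> ?F" "c \<in> ?F" "a \<subseteq> c"
  obtain ma Ea where a: "a = divisors ma \<union> Ea" "ma dvd n" "ma \<noteq> 2" "Ea \<subseteq> {2}"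
    using divisor_family_cases[OF abc(1)] by blast
  obtain mb Eb where b: "b = divisors mb \<union> Eb" "mb dvd n" "mb \<noteq> 2" "Eb \<subseteq> {2}"
    using divisor_family_cases[OF abc(2)] by blast
  obtain mc Ec where c: "c = divisors mc \<union> Ec" "mc dvd n" "mc \<noteq> 2" "Ec \<subseteq> {2}"
    using divisor_family_cases[OF abc(3)] by blast
  let ?L = "pjoin ?F a (b \<inter> c)"
  have L: "is_join ?F a (b \<inter> c) ?L"
    using abc by (simp add: is_join_pjoin is_lattice_family_divisor_family divisor_family_Int)
  have lcm_subset: "divisors (lcm ma (gcd mb mc)) \<subseteq> ?L" if "gcd mb mc \<noteq> 2"
  proof (rule divisors_lcm_subset[OF is_joinD(1)[OF L]])
    show "ma \<in> ?L" "gcd mb mc \<in> ?L"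
      using a(1) b(1) c(1) is_joinD(2,3)[OF L] by (auto simp: divisors_def)
  qed (use a(3) that in auto)
  have join: "pjoin ?F a b = divisors (lcm ma mb) \<union> Ea \<union> Eb"
    unfolding a(1) b(1) using a b by (intro pjoin_eqI is_join_divisor_family)
  show "pjoin ?F a b \<inter> c \<subseteq> ?L"
  proof
    fix z
    assume "z \<in> pjoin ?F a b \<inter> c"
    then have "z \<in> divisors (lcm ma mb) \<union> Ea \<union> Eb" "z \<in> divisors mc \<union> Ec"
      unfolding join c(1) by blast+
    then have "z \<in> a \<or> z \<in> b \<inter> c \<or> (gcd mb mc \<noteq> 2 \<and> z dvd lcm ma (gcd mb mc))"
      unfolding a(1) b(1) c(1)
      by (rule divisor_family_modular_cases[OF assms b(2) c(2) a(3) b(3) c(4) abc(4)[unfolded a(1) c(1)]])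
    then show "z \<in> ?L"
      using is_joinD(2,3)[OF L] lcm_subset by (auto simp: divisors_def)
  qed
qed

text \<open>A pentagon: b \<inter> c = divisors 2 lies below a, but the join of a and b meets c in a set
  containing 2 * p.\<close>

lemma not_modular_divisor_family:
  assumes "odd p" "p \<noteq> 1" "f \<noteq> 1" "coprime p f" "2 * p dvd n" "2 * f dvd n"
  shows "\<not> modular_lattice_family (divisor_family n)"
proof
  let ?F = "divisor_family n"
  let ?a = "divisors p \<union> {2}" and ?b = "divisors (2 * f)" and ?c = "divisors (2 * p)"
  assume modular: "modular_lattice_family ?F"
  have "p dvd n"
    using assms(5) by (rule dvd_mult_right)
  have in_F: "?a \<in> ?F" "?b \<in> ?F" "?c \<in> ?F"
    using divisor_familyI[OF \<open>p dvd n\<close>, of "{2}"] divisor_familyI[OF assms(6), of "{}"]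
      divisor_familyI[OF assms(5), of "{}"] by simp_all
  have "?a \<subseteq> ?c"
    unfolding divisors_def by auto
  have "gcd (2 * f) (2 * p) = 2"
    using assms(4) by (simp add: gcd_mult_distrib_nat[symmetric] coprime_iff_gcd_eq_1 gcd.commute)
  then have "?b \<inter> ?c \<subseteq> ?a"
    by (simp add: divisors_Int divisors_2) (auto simp: divisors_def)
  then have "pjoin ?F ?a (?b \<inter> ?c) = ?a"
    using in_F(1) by (intro pjoin_eqI is_join_of_subset)
  moreover have "is_join ?F ?a (?b \<union> {}) (divisors (lcm p (2 * f)) \<union> {2} \<union> {})"
    using assms(1,3) by (intro is_join_divisor_family \<open>p dvd n\<close> assms(6)) auto
  then have "pjoin ?F ?a ?b = divisors (lcm p (2 * f)) \<union> {2}"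
    by (simp add: pjoin_eqI)
  ultimately have "?a = (divisors (lcm p (2 * f)) \<union> {2}) \<inter> ?c"
    using modular_lattice_familyD[OF modular divisor_family_Int in_F \<open>?a \<subseteq> ?c\<close>] by simp
  moreover have "2 * p dvd lcm p (2 * f)"
    using assms(1) by (intro divides_mult) (auto intro: dvd_trans[OF _ dvd_lcm2])
  ultimately have "2 * p \<in> ?a"
    by (simp add: divisors_def)
  moreover have "\<not> 2 * p dvd p"
    using odd_pos[OF assms(1)] dvd_imp_le[of "2 * p" p] by auto
  ultimately show False
    using assms(2) by (simp add: divisors_def)
qed

theorem theorem2p10:
  fixes n :: nat
  assumes "n \<ge> 1"
  shows "modular_lattice_family (pi_poset (dihedral_group n)) \<longleftrightarrow>
           (\<exists>\<alpha>::nat. n = 2 ^ \<alpha>) \<or>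
           odd n \<or>
           (\<exists>(p::nat) (\<alpha>::nat). Factorial_Ring.prime p \<and> odd p \<and> \<alpha> \<ge> 1 \<and> n = 2 * p ^ \<alpha>)"
proof -
  let ?special = "(\<exists>\<alpha>::nat. n = 2 ^ \<alpha>) \<or> odd n \<or>
    (\<exists>(p::nat) (\<alpha>::nat). Factorial_Ring.prime p \<and> odd p \<and> \<alpha> \<ge> 1 \<and> n = 2 * p ^ \<alpha>)"
  have "modular_lattice_family (divisor_family n)" if ?special
    using that by (intro modular_divisor_family no_even_divisor_pair_gcd_2_if_special_form)
  moreover have "\<not> modular_lattice_family (divisor_family n)" if "\<not> ?special"
  proof -
    have "even n" "\<nexists>\<alpha>. n = 2 ^ \<alpha>"
      "\<nexists>p \<alpha>. Factorial_Ring.prime p \<and> odd p \<and> \<alpha> \<ge> 1 \<and> n = 2 * p ^ \<alpha>"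
      using that by auto
    then obtain p f where "odd p" "p \<noteq> 1" "f \<noteq> 1" "coprime p f" "2 * p dvd n" "2 * f dvd n"
      by (rule doubled_coprime_divisors[OF assms])
    then show ?thesis
      by (rule not_modular_divisor_family)
  qed
  ultimately show ?thesis
    unfolding pi_poset_dihedral_group[OF assms] by blast
qed

end
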